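(* Let $T\in\mathcal B(H)$ be such that $\mathcal A_T$ admits a gauge action. Then either $\mathcal A_T$ is semisimple (its Jacobson radical is $(0)$) or $\mathcal A_T$ is a radical algebra (its Jacobson radical is all of $\mathcal A_T$).
   Context: $H$ is a complex Hilbert space, $T\in\mathcal B(H)$, and $\mathcal A_T$ is the operator-norm closure in $\mathcal B(H)$ of the polynomials $p(T)$ with $p(0)=0$; it is a commutative (possibly non-unital) Banach algebra. A gauge action on $\mathcal A_T$ is a group homomorphism $\lambda\mapsto\gamma_\lambda$ from the unit circle $\mathbb T$ into the isometric algebra automorphisms of $\mathcal A_T$ such that $\gamma_\lambda(T)=\lambda T$ for all $\lambda$ and $\lambda\mapsto\gamma_\lambda(S)$ is norm continuous for each $S\in\mathcal A_T$. *)

theory Defs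
  imports "HOL-Analysis.Analysis"
begin

class complex_vector = real_vector +
  fixes scaleC :: "complex \<Rightarrow> 'a \<Rightarrow> 'a"  (infixr \<open>*\<^sub>C\<close> 75)
  assumes scaleC_add_right: "c *\<^sub>C (x + y) = c *\<^sub>C x + c *\<^sub>C y"
    and scaleC_add_left: "(b + c) *\<^sub>C x = b *\<^sub>C x + c *\<^sub>C x"
    and scaleC_scaleC: "b *\<^sub>C (c *\<^sub>C x) = (b * c) *\<^sub>C x"
    and scaleC_one: "1 *\<^sub>C x = x"
    and scaleR_scaleC: "scaleR r = scaleC (complex_of_real r)"

class complex_inner = complex_vector + real_normed_vector +
  fixes cinner :: "'a \<Rightarrow> 'a \<Rightarrow> complex"
  assumes cinner_commute: "cinner x y = cnj (cinner y x)"
    and cinner_add_left: "cinner (x + y) z = cinner x z + cinner y z"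
    and cinner_scaleC_left: "cinner (c *\<^sub>C x) y = cnj c * cinner x y"
    and cinner_self_real: "Im (cinner x x) = 0"
    and cinner_self_nonneg: "0 \<le> Re (cinner x x)"
    and cinner_eq_zero_iff: "cinner x x = 0 \<longleftrightarrow> x = 0"
    and norm_eq_sqrt_cinner: "norm x = sqrt (Re (cinner x x))"

class chilbert_space = complex_inner + complete_space

text \<open>B(H): bounded (real-linear, continuous) maps that are complex linear.
  The norm of blinfun is the operator norm.\<close>
definition bounded_ops :: "('h::chilbert_space \<Rightarrow>\<^sub>L 'h) set" where
  "bounded_ops = {T. \<forall>c x. blinfun_apply T (c *\<^sub>C x) = c *\<^sub>C blinfun_apply T x}"

definition op_scaleC :: "complex \<Rightarrow> ('h::chilbert_space \<Rightarrow>\<^sub>L 'h) \<Rightarrow> ('h \<Rightarrow>\<^sub>L 'h)" where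
  "op_scaleC c T = Blinfun (\<lambda>x. c *\<^sub>C blinfun_apply T x)"

definition poly_op :: "(nat \<Rightarrow> complex) \<Rightarrow> nat \<Rightarrow> ('h::chilbert_space \<Rightarrow>\<^sub>L 'h) \<Rightarrow> ('h \<Rightarrow>\<^sub>L 'h)" where
  "poly_op a n T = Blinfun (\<lambda>x. \<Sum>k\<in>{1..n}. a k *\<^sub>C ((blinfun_apply T ^^ k) x))"

definition alg_T :: "('h::chilbert_space \<Rightarrow>\<^sub>L 'h) \<Rightarrow> ('h \<Rightarrow>\<^sub>L 'h) set" where
  "alg_T T = closure {poly_op a n T | a n. True}"

text \<open>x is left quasi-regular in A: there is c in A with c + x - c x = 0
  (i.e. (1-c)(1-x) = 1 in the unitization).\<close>
definition quasi_regular_in :: "('h::chilbert_space \<Rightarrow>\<^sub>L 'h) set \<Rightarrow> ('h \<Rightarrow>\<^sub>L 'h) \<Rightarrow> bool" where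
  "quasi_regular_in A x \<longleftrightarrow> (\<exists>c\<in>A. c + x - (c o\<^sub>L x) = 0)"

text \<open>Jacobson radical of the (possibly non-unital) algebra A (multiplication = composition):
  a is in rad A iff the left ideal generated by a, consisting of the elements
  lambda a + b a (lambda complex, b in A), is quasi-regular.\<close>
definition jacobson_radical :: "('h::chilbert_space \<Rightarrow>\<^sub>L 'h) set \<Rightarrow> ('h \<Rightarrow>\<^sub>L 'h) set" where
  "jacobson_radical A =
     {a \<in> A. \<forall>l::complex. \<forall>b\<in>A. quasi_regular_in A (op_scaleC l a + (b o\<^sub>L a))}"

definition gauge_action :: "('h::chilbert_space \<Rightarrow>\<^sub>L 'h) \<Rightarrow> (complex \<Rightarrow> ('h \<Rightarrow>\<^sub>L 'h) \<Rightarrow> ('h \<Rightarrow>\<^sub>L 'h)) \<Rightarrow> bool" where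
  "gauge_action T \<gamma> \<longleftrightarrow>
     (\<forall>l. cmod l = 1 \<longrightarrow>
        bij_betw (\<gamma> l) (alg_T T) (alg_T T) \<and>
        (\<forall>S\<in>alg_T T. \<forall>R\<in>alg_T T. \<gamma> l (S + R) = \<gamma> l S + \<gamma> l R) \<and>
        (\<forall>S\<in>alg_T T. \<forall>c. \<gamma> l (op_scaleC c S) = op_scaleC c (\<gamma> l S)) \<and>
        (\<forall>S\<in>alg_T T. \<forall>R\<in>alg_T T. \<gamma> l (S o\<^sub>L R) = \<gamma> l S o\<^sub>L \<gamma> l R) \<and>
        (\<forall>S\<in>alg_T T. norm (\<gamma> l S) = norm S) \<and>
        \<gamma> l T = op_scaleC l T) \<and>
     (\<forall>l m. cmod l = 1 \<longrightarrow> cmod m = 1 \<longrightarrow> (\<forall>S\<in>alg_T T. \<gamma> (l * m) S = \<gamma> l (\<gamma> m S))) \<and>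
     (\<forall>S\<in>alg_T T. continuous_on {l. cmod l = 1} (\<lambda>l. \<gamma> l S))"

end

theory Submission
  imports Defs
begin

text \<open>
  The Jacobson radical J of the closed commutative algebra A_T is a closed ideal that is
  invariant under algebra automorphisms, in particular under the gauge action. If T lies in J,
  then J contains every polynomial in T and, being closed, all of A_T. Otherwise no power T^k
  lies in J: a power of an element of the ideal generated by T lies in the ideal generated by
  T^k, and quasi-regularity passes from a power to the element itself. For S in J, the Fourier
  coefficients of the orbit \<lambda> \<mapsto> \<gamma>_\<lambda>(S) lie in J and, since on polynomials they pick out a
  single monomial, they are multiples of powers T^k with k \<ge> 1; as J is closed and misses
  these powers, all of them vanish. By Fejer's theorem at \<lambda> = 1, S is the limit of the Fejer
  means of the orbit, which are averages of Fourier coefficients, so S = 0. Integrals over the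
  circle are replaced by averages over the N-th roots of unity, with N tending to infinity.
\<close>

instance chilbert_space \<subseteq> banach ..

lemma cinner_scaleC_right: "cinner x (c *\<^sub>C y) = c * cinner x (y::'a::complex_inner)"
  by (metis cinner_commute cinner_scaleC_left complex_cnj_cnj complex_cnj_mult)

lemma norm_scaleC [simp]: "norm (c *\<^sub>C (x::'a::complex_inner)) = cmod c * norm x"
proof -
  have "cinner (c *\<^sub>C x) (c *\<^sub>C x) = (cnj c * c) * cinner x x"
    by (simp add: cinner_scaleC_left cinner_scaleC_right)
  also have "cnj c * c = complex_of_real ((cmod c)\<^sup>2)"
    using complex_norm_square by (simp add: mult.commute)
  finally have "Re (cinner (c *\<^sub>C x) (c *\<^sub>C x)) = (cmod c)\<^sup>2 * Re (cinner x x)"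
    by simp
  thus ?thesis by (simp add: norm_eq_sqrt_cinner real_sqrt_mult)
qed

lemma bounded_linear_scaleC: "bounded_linear (scaleC c :: 'a::complex_inner \<Rightarrow> 'a)"
proof
  fix x y :: 'a and r :: real
  show "c *\<^sub>C (x + y) = c *\<^sub>C x + c *\<^sub>C y" by (rule scaleC_add_right)
  show "c *\<^sub>C (r *\<^sub>R x) = r *\<^sub>R (c *\<^sub>C x)"
    by (simp add: scaleR_scaleC scaleC_scaleC mult.commute)
  show "\<exists>K. \<forall>x::'a. norm (c *\<^sub>C x) \<le> norm x * K"
    by (rule exI[of _ "cmod c"]) (simp add: mult.commute)
qed

lemmas scaleC_zero_right [simp] = linear_0[OF bounded_linear.linear[OF bounded_linear_scaleC]]

lemma scaleC_zero_left [simp]: "0 *\<^sub>C (x::'a::complex_vector) = 0"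
  by (metis of_real_0 scaleR_scaleC scale_zero_left)

lemma op_scaleC_apply [simp]: "blinfun_apply (op_scaleC c S) x = c *\<^sub>C blinfun_apply S x"
proof -
  have "bounded_linear (\<lambda>x. c *\<^sub>C blinfun_apply S x)"
    using bounded_linear_compose[OF bounded_linear_scaleC blinfun.bounded_linear_right] by blast
  thus ?thesis unfolding op_scaleC_def by (simp add: bounded_linear_Blinfun_apply)
qed

lemma norm_op_scaleC: "norm (op_scaleC c (S::'h::chilbert_space \<Rightarrow>\<^sub>L 'h)) = cmod c * norm S"
proof (rule antisym)
  show le: "norm (op_scaleC c S) \<le> cmod c * norm S" for c and S :: "'h \<Rightarrow>\<^sub>L 'h"
    by (rule norm_blinfun_bound) (auto simp: mult.assoc intro!: mult_left_mono norm_blinfun)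
  show "cmod c * norm S \<le> norm (op_scaleC c S)"
  proof (cases "c = 0")
    case False
    have "S = op_scaleC (1 / c) (op_scaleC c S)"
      using False by (intro blinfun_eqI) (simp add: scaleC_scaleC scaleC_one)
    hence "norm S \<le> norm (op_scaleC c S) / cmod c"
      using le[of "1 / c" "op_scaleC c S"] by (simp add: norm_divide)
    thus ?thesis using False by (simp add: field_simps)
  qed simp
qed

lemma bounded_linear_op_scaleC:
  "bounded_linear (op_scaleC c :: ('h::chilbert_space \<Rightarrow>\<^sub>L 'h) \<Rightarrow> _)"
proof (rule bounded_linear_intro[where K = "cmod c"])
  fix S R :: "'h \<Rightarrow>\<^sub>L 'h" and r :: real
  show "op_scaleC c (S + R) = op_scaleC c S + op_scaleC c R"
    by (rule blinfun_eqI) (simp add: blinfun.add_left scaleC_add_right)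
  show "op_scaleC c (r *\<^sub>R S) = r *\<^sub>R op_scaleC c S"
    by (rule blinfun_eqI) (simp add: blinfun.scaleR_left linear_scale[OF bounded_linear.linear[OF bounded_linear_scaleC]])
  show "norm (op_scaleC c S) \<le> norm S * cmod c"
    by (simp add: norm_op_scaleC mult.commute)
qed

lemmas op_scaleC_zero_right [simp] = linear_0[OF bounded_linear.linear[OF bounded_linear_op_scaleC]]
lemmas op_scaleC_add_right = linear_add[OF bounded_linear.linear[OF bounded_linear_op_scaleC]]
lemmas op_scaleC_diff_right = linear_diff[OF bounded_linear.linear[OF bounded_linear_op_scaleC]]
lemmas op_scaleC_sum_right = linear_sum[OF bounded_linear.linear[OF bounded_linear_op_scaleC]]
lemmas continuous_on_op_scaleC = linear_continuous_on[OF bounded_linear_op_scaleC]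

lemma op_scaleC_add_left: "op_scaleC (c + d) S = op_scaleC c S + op_scaleC d S"
  by (rule blinfun_eqI) (simp add: blinfun.add_left scaleC_add_left)

lemma op_scaleC_zero [simp]: "op_scaleC 0 S = 0"
  by (rule blinfun_eqI) simp

lemma op_scaleC_sum_left: "op_scaleC (\<Sum>i\<in>I. f i) S = (\<Sum>i\<in>I. op_scaleC (f i) S)"
  by (induction I rule: infinite_finite_induct) (auto simp: op_scaleC_add_left)

lemma op_scaleC_scaleC: "op_scaleC c (op_scaleC d S) = op_scaleC (c * d) S"
  by (rule blinfun_eqI) (simp add: scaleC_scaleC)

lemma op_scaleC_one [simp]: "op_scaleC 1 S = S"
  by (rule blinfun_eqI) (simp add: scaleC_one)

lemma op_scaleC_minus_one: "op_scaleC (-1) S = - S"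
  by (rule blinfun_eqI) (metis blinfun.minus_left of_real_1 of_real_minus op_scaleC_apply
      scaleR_minus1_left scaleR_scaleC)

lemma op_scaleC_of_real: "op_scaleC (complex_of_real r) S = r *\<^sub>R S"
  by (rule blinfun_eqI) (simp add: scaleR_scaleC blinfun.scaleR_left)

interpretation blinfun_compose: bounded_bilinear "(o\<^sub>L)"
  by (rule bounded_bilinear_blinfun_compose)

lemma blinfun_compose_assoc: "(a o\<^sub>L b) o\<^sub>L c = a o\<^sub>L (b o\<^sub>L c)"
  by (rule blinfun_eqI) simp

lemma blinfun_compose_id_left [simp]: "id_blinfun o\<^sub>L a = a"
  and blinfun_compose_id_right [simp]: "a o\<^sub>L id_blinfun = a"
  by (auto intro: blinfun_eqI)

lemma closed_bounded_ops: "closed (bounded_ops :: ('h::chilbert_space \<Rightarrow>\<^sub>L 'h) set)"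
proof -
  have "closed {T::'h \<Rightarrow>\<^sub>L 'h. blinfun_apply T (c *\<^sub>C x) = c *\<^sub>C blinfun_apply T x}" for c x
    by (intro closed_Collect_eq continuous_intros
        continuous_on_compose2[OF linear_continuous_on[OF bounded_linear_scaleC]]) auto
  hence "closed (\<Inter>c. \<Inter>x. {T::'h \<Rightarrow>\<^sub>L 'h. blinfun_apply T (c *\<^sub>C x) = c *\<^sub>C blinfun_apply T x})"
    by (intro closed_INT ballI)
  moreover have "bounded_ops = (\<Inter>c. \<Inter>x. {T::'h \<Rightarrow>\<^sub>L 'h. blinfun_apply T (c *\<^sub>C x) = c *\<^sub>C blinfun_apply T x})"
    by (auto simp: bounded_ops_def)
  ultimately show ?thesis by simp
qed

lemma bounded_ops_add: "S \<in> bounded_ops \<Longrightarrow> R \<in> bounded_ops \<Longrightarrow> S + R \<in> bounded_ops"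
  by (auto simp: bounded_ops_def blinfun.add_left scaleC_add_right)

lemma bounded_ops_scale: "S \<in> bounded_ops \<Longrightarrow> op_scaleC c S \<in> bounded_ops"
  by (auto simp: bounded_ops_def scaleC_scaleC mult.commute)

lemma bounded_ops_compose: "S \<in> bounded_ops \<Longrightarrow> R \<in> bounded_ops \<Longrightarrow> S o\<^sub>L R \<in> bounded_ops"
  by (auto simp: bounded_ops_def)

lemma id_blinfun_in_bounded_ops: "id_blinfun \<in> bounded_ops"
  and zero_in_bounded_ops: "0 \<in> bounded_ops"
  by (auto simp: bounded_ops_def)

lemma op_scaleC_compose_op_scaleC:
  "S \<in> bounded_ops \<Longrightarrow> op_scaleC c S o\<^sub>L op_scaleC d R = op_scaleC (c * d) (S o\<^sub>L R)"
  by (rule blinfun_eqI) (simp add: bounded_ops_def scaleC_scaleC)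

section \<open>Polynomials in an operator\<close>

primrec op_power :: "('h::chilbert_space \<Rightarrow>\<^sub>L 'h) \<Rightarrow> nat \<Rightarrow> ('h \<Rightarrow>\<^sub>L 'h)" where
  "op_power S 0 = id_blinfun"
| "op_power S (Suc n) = S o\<^sub>L op_power S n"

lemma op_power_add: "op_power S (m + n) = op_power S m o\<^sub>L op_power S n"
  by (induction m) (auto simp: blinfun_compose_assoc)

lemma op_power_Suc': "op_power S (Suc n) = op_power S n o\<^sub>L S"
  using op_power_add[of S n 1] by simp

lemma op_power_in_bounded_ops: "S \<in> bounded_ops \<Longrightarrow> op_power S n \<in> bounded_ops"
  by (induction n) (auto intro: id_blinfun_in_bounded_ops bounded_ops_compose)

lemma norm_op_power_le: "norm (op_power S n) \<le> norm S ^ n"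
proof (induction n)
  case (Suc n)
  have "norm (op_power S (Suc n)) \<le> norm S * norm (op_power S n)"
    using norm_blinfun_compose by simp
  also have "\<dots> \<le> norm S * norm S ^ n" by (intro mult_left_mono Suc) simp
  finally show ?case by simp
qed (simp add: norm_blinfun_id_le)

lemma geometric_sum_op_power:
  "(\<Sum>i<k. op_power z i) o\<^sub>L (id_blinfun - z) = id_blinfun - op_power z k"
proof (induction k)
  case (Suc k)
  have "(\<Sum>i<Suc k. op_power z i) o\<^sub>L (id_blinfun - z) =
      ((\<Sum>i<k. op_power z i) o\<^sub>L (id_blinfun - z)) + (op_power z k o\<^sub>L (id_blinfun - z))"
    by (simp add: blinfun_compose.add_left del: op_power.simps)
  also have "\<dots> = id_blinfun - op_power z (Suc k)"
    unfolding Suc op_power_Suc' by (simp add: blinfun_compose.diff_right del: op_power.simps)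
  finally show ?case .
qed (auto intro: blinfun_eqI)

lemma op_power_commute:
  assumes "u o\<^sub>L T = T o\<^sub>L u"
  shows "op_power u k o\<^sub>L T = T o\<^sub>L op_power u k"
proof (induction k)
  case (Suc k)
  have "op_power u (Suc k) o\<^sub>L T = u o\<^sub>L (op_power u k o\<^sub>L T)"
    by (simp only: op_power.simps blinfun_compose_assoc)
  also have "\<dots> = (u o\<^sub>L T) o\<^sub>L op_power u k"
    by (simp only: Suc.IH blinfun_compose_assoc)
  also have "\<dots> = T o\<^sub>L op_power u (Suc k)"
    by (simp only: assms op_power.simps blinfun_compose_assoc)
  finally show ?case .
qed simp

lemma op_power_compose:
  assumes "u o\<^sub>L T = T o\<^sub>L u"
  shows "op_power (u o\<^sub>L T) k = op_power u k o\<^sub>L op_power T k"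
proof (induction k)
  case (Suc k)
  have "op_power (u o\<^sub>L T) (Suc k) = u o\<^sub>L (T o\<^sub>L op_power u k) o\<^sub>L op_power T k"
    by (simp only: op_power.simps Suc.IH blinfun_compose_assoc)
  also have "\<dots> = u o\<^sub>L (op_power u k o\<^sub>L T) o\<^sub>L op_power T k"
    by (simp only: op_power_commute[OF assms])
  finally show ?case by (simp only: op_power.simps blinfun_compose_assoc)
qed simp

lemma poly_op_eq_sum: "poly_op a n T = (\<Sum>k\<in>{1..n}. op_scaleC (a k) (op_power T k))"
proof -
  have power_apply: "blinfun_apply (op_power T k) = blinfun_apply T ^^ k" for k
    by (induction k) auto
  have "blinfun_apply (\<Sum>k\<in>{1..n}. op_scaleC (a k) (op_power T k)) =
      (\<lambda>x. \<Sum>k\<in>{1..n}. a k *\<^sub>C ((blinfun_apply T ^^ k) x))"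
    by (auto simp: blinfun.sum_left power_apply)
  thus ?thesis unfolding poly_op_def by (metis blinfun_apply_inverse)
qed

definition poly_ops :: "('h::chilbert_space \<Rightarrow>\<^sub>L 'h) \<Rightarrow> ('h \<Rightarrow>\<^sub>L 'h) set" where
  "poly_ops T = {poly_op a n T | a n. True}"

lemma alg_T_eq_closure_poly_ops: "alg_T T = closure (poly_ops T)"
  unfolding alg_T_def poly_ops_def ..

lemma poly_ops_iff_sum:
  "P \<in> poly_ops T \<longleftrightarrow> (\<exists>a n. P = (\<Sum>k\<in>{1..n}. op_scaleC (a k) (op_power T k)))"
  by (simp add: poly_ops_def poly_op_eq_sum)

lemma poly_ops_zero: "0 \<in> poly_ops T"
  unfolding poly_ops_iff_sum by (rule exI[of _ "\<lambda>_. 0"]) simp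

lemma op_power_in_poly_ops: "1 \<le> k \<Longrightarrow> op_scaleC c (op_power T k) \<in> poly_ops T"
proof -
  assume "1 \<le> k"
  hence "op_scaleC c (op_power T k) =
      (\<Sum>j\<in>{1..k}. op_scaleC (if j = k then c else 0) (op_power T j))"
    by (simp add: if_distrib[of "\<lambda>x. op_scaleC x _"] cong: if_cong)
  thus ?thesis unfolding poly_ops_iff_sum by - (intro exI, assumption)
qed

lemma poly_ops_add: "P \<in> poly_ops T \<Longrightarrow> Q \<in> poly_ops T \<Longrightarrow> P + Q \<in> poly_ops T"
proof -
  assume "P \<in> poly_ops T" "Q \<in> poly_ops T"
  then obtain a n b m where P: "P = (\<Sum>k\<in>{1..n}. op_scaleC (a k) (op_power T k))"
    and Q: "Q = (\<Sum>k\<in>{1..m}. op_scaleC (b k) (op_power T k))"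
    by (auto simp: poly_ops_iff_sum)
  have pad: "(\<Sum>k\<in>{1..n}. op_scaleC (a k) (op_power T k)) =
      (\<Sum>k\<in>{1..max n m}. op_scaleC (if k \<le> n then a k else 0) (op_power T k))"
    for a :: "nat \<Rightarrow> complex" and n m
    by (rule sum.mono_neutral_cong_left) auto
  have "P + Q = (\<Sum>k\<in>{1..max n m}.
      op_scaleC ((if k \<le> n then a k else 0) + (if k \<le> m then b k else 0)) (op_power T k))"
    unfolding P Q pad[of a n m] pad[of b m n] max.commute[of m n]
    by (simp add: op_scaleC_add_left sum.distrib)
  thus ?thesis unfolding poly_ops_iff_sum by - (intro exI, assumption)
qed

lemma poly_ops_sum: "(\<And>i. i \<in> I \<Longrightarrow> f i \<in> poly_ops T) \<Longrightarrow> (\<Sum>i\<in>I. f i) \<in> poly_ops T"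
  by (induction I rule: infinite_finite_induct) (auto intro: poly_ops_add poly_ops_zero)

lemma poly_ops_scale: "P \<in> poly_ops T \<Longrightarrow> op_scaleC c P \<in> poly_ops T"
proof -
  assume "P \<in> poly_ops T"
  then obtain a n where "P = (\<Sum>k\<in>{1..n}. op_scaleC (a k) (op_power T k))"
    by (auto simp: poly_ops_iff_sum)
  hence "op_scaleC c P = (\<Sum>k\<in>{1..n}. op_scaleC (c * a k) (op_power T k))"
    by (simp add: op_scaleC_sum_right op_scaleC_scaleC)
  thus ?thesis unfolding poly_ops_iff_sum by - (intro exI, assumption)
qed

lemma poly_ops_compose_expand:
  assumes "T \<in> bounded_ops"
  shows "(\<Sum>i\<in>{1..n}. op_scaleC (a i) (op_power T i)) o\<^sub>L (\<Sum>j\<in>{1..m}. op_scaleC (b j) (op_power T j)) =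
    (\<Sum>i\<in>{1..n}. \<Sum>j\<in>{1..m}. op_scaleC (a i * b j) (op_power T (i + j)))"
  unfolding blinfun_compose.sum_left blinfun_compose.sum_right
  by (simp add: op_scaleC_compose_op_scaleC op_power_in_bounded_ops[OF assms] op_power_add)
    (subst sum.swap, rule refl)

lemma poly_ops_compose:
  assumes "T \<in> bounded_ops" "P \<in> poly_ops T" "Q \<in> poly_ops T"
  shows "P o\<^sub>L Q \<in> poly_ops T"
proof -
  obtain a n b m where P: "P = (\<Sum>i\<in>{1..n}. op_scaleC (a i) (op_power T i))"
    and Q: "Q = (\<Sum>j\<in>{1..m}. op_scaleC (b j) (op_power T j))"
    using assms(2,3) by (auto simp: poly_ops_iff_sum)
  show ?thesis unfolding P Q poly_ops_compose_expand[OF assms(1)]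
    by (intro poly_ops_sum op_power_in_poly_ops) auto
qed

lemma poly_ops_commute:
  assumes "T \<in> bounded_ops" "P \<in> poly_ops T" "Q \<in> poly_ops T"
  shows "P o\<^sub>L Q = Q o\<^sub>L P"
proof -
  obtain a n b m where P: "P = (\<Sum>i\<in>{1..n}. op_scaleC (a i) (op_power T i))"
    and Q: "Q = (\<Sum>j\<in>{1..m}. op_scaleC (b j) (op_power T j))"
    using assms(2,3) by (auto simp: poly_ops_iff_sum)
  show ?thesis unfolding P Q poly_ops_compose_expand[OF assms(1)]
    by (subst sum.swap) (simp add: mult.commute add.commute)
qed

lemma poly_ops_subset_bounded_ops: "T \<in> bounded_ops \<Longrightarrow> poly_ops T \<subseteq> bounded_ops"
proof
  fix P assume T: "T \<in> bounded_ops" and "P \<in> poly_ops T"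
  then obtain a n where P: "P = (\<Sum>k\<in>{1..n}. op_scaleC (a k) (op_power T k))"
    by (auto simp: poly_ops_iff_sum)
  have "(\<Sum>k\<in>K. op_scaleC (a k) (op_power T k)) \<in> bounded_ops" for K :: "nat set"
    by (induction K rule: infinite_finite_induct)
      (auto intro!: bounded_ops_add bounded_ops_scale op_power_in_bounded_ops T zero_in_bounded_ops)
  thus "P \<in> bounded_ops" unfolding P .
qed

section \<open>The algebra generated by an operator\<close>

lemma closure_preserves_binop:
  assumes "\<And>x y. x \<in> S \<Longrightarrow> y \<in> S \<Longrightarrow> f x y \<in> S"
    and "continuous_on UNIV (\<lambda>p. f (fst p) (snd p))"
    and "x \<in> closure S" "y \<in> closure S"
  shows "f x y \<in> closure S"
proof -
  have "(\<lambda>p. f (fst p) (snd p)) ` closure (S \<times> S) \<subseteq> closure S"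
    by (rule image_closure_subset)
      (use assms(1,2) in \<open>auto intro: continuous_on_subset closure_subset[THEN subsetD]\<close>)
  thus ?thesis using assms(3,4) by (force simp: closure_Times)
qed

lemma closure_preserves_unop:
  assumes "\<And>x. x \<in> S \<Longrightarrow> f x \<in> S" and "continuous_on UNIV f" and "x \<in> closure S"
  shows "f x \<in> closure S"
proof -
  have "f ` closure S \<subseteq> closure S"
    by (rule image_closure_subset)
      (use assms(1,2) in \<open>auto intro: continuous_on_subset closure_subset[THEN subsetD]\<close>)
  thus ?thesis using assms(3) by auto
qed

locale operator_algebra =
  fixes T :: "'h::chilbert_space \<Rightarrow>\<^sub>L 'h"
  assumes bounded_op: "T \<in> bounded_ops"
begin

abbreviation \<A> where "\<A> \<equiv> alg_T T"
abbreviation \<J> where "\<J> \<equiv> jacobson_radical \<A>"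

lemma alg_add: "x \<in> \<A> \<Longrightarrow> y \<in> \<A> \<Longrightarrow> x + y \<in> \<A>"
  unfolding alg_T_eq_closure_poly_ops
proof (rule closure_preserves_binop[where f = "(+)"])
  show "continuous_on UNIV (\<lambda>p::('h \<Rightarrow>\<^sub>L 'h) \<times> ('h \<Rightarrow>\<^sub>L 'h). fst p + snd p)"
    by (intro continuous_intros)
qed (auto intro: poly_ops_add)

lemma alg_compose: "x \<in> \<A> \<Longrightarrow> y \<in> \<A> \<Longrightarrow> x o\<^sub>L y \<in> \<A>"
  unfolding alg_T_eq_closure_poly_ops
proof (rule closure_preserves_binop[where f = "(o\<^sub>L)"])
  show "continuous_on UNIV (\<lambda>p::('h \<Rightarrow>\<^sub>L 'h) \<times> ('h \<Rightarrow>\<^sub>L 'h). fst p o\<^sub>L snd p)"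
    by (intro continuous_intros)
qed (auto intro: poly_ops_compose[OF bounded_op])

lemma alg_scale: "x \<in> \<A> \<Longrightarrow> op_scaleC c x \<in> \<A>"
  unfolding alg_T_eq_closure_poly_ops
  by (rule closure_preserves_unop) (auto intro: poly_ops_scale continuous_on_op_scaleC)

lemma alg_minus: "x \<in> \<A> \<Longrightarrow> - x \<in> \<A>"
  using alg_scale[of x "-1"] by (simp add: op_scaleC_minus_one)

lemma alg_diff: "x \<in> \<A> \<Longrightarrow> y \<in> \<A> \<Longrightarrow> x - y \<in> \<A>"
  using alg_add[of x "- y"] alg_minus[of y] by simp

lemma poly_ops_subset_alg: "poly_ops T \<subseteq> \<A>"
  unfolding alg_T_eq_closure_poly_ops by (rule closure_subset)

lemma alg_zero: "0 \<in> \<A>"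
  using poly_ops_subset_alg poly_ops_zero by blast

lemma op_power_in_alg: "1 \<le> k \<Longrightarrow> op_power T k \<in> \<A>"
  using poly_ops_subset_alg op_power_in_poly_ops[of k 1 T] by auto

lemma generator_in_alg: "T \<in> \<A>"
  using op_power_in_alg[of 1] by simp

lemma alg_sum: "(\<And>i. i \<in> I \<Longrightarrow> f i \<in> \<A>) \<Longrightarrow> (\<Sum>i\<in>I. f i) \<in> \<A>"
  by (induction I rule: infinite_finite_induct) (auto intro: alg_add alg_zero)

lemma alg_op_power: "w \<in> \<A> \<Longrightarrow> 1 \<le> k \<Longrightarrow> op_power w k \<in> \<A>"
proof (induction k)
  case (Suc k) thus ?case by (cases "k = 0") (auto intro: alg_compose)
qed simp

lemma closed_alg: "closed \<A>"
  unfolding alg_T_eq_closure_poly_ops by simp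

lemma alg_subset_bounded_ops: "\<A> \<subseteq> bounded_ops"
  unfolding alg_T_eq_closure_poly_ops
  by (rule closure_minimal[OF poly_ops_subset_bounded_ops[OF bounded_op] closed_bounded_ops])

lemma alg_commute: "x \<in> \<A> \<Longrightarrow> y \<in> \<A> \<Longrightarrow> x o\<^sub>L y = y o\<^sub>L x"
proof -
  assume xy: "x \<in> \<A>" "y \<in> \<A>"
  let ?C = "{p :: ('h \<Rightarrow>\<^sub>L 'h) \<times> ('h \<Rightarrow>\<^sub>L 'h). (fst p o\<^sub>L snd p) - (snd p o\<^sub>L fst p) = 0}"
  have "closed ?C" by (intro closed_Collect_eq continuous_intros)
  moreover have "poly_ops T \<times> poly_ops T \<subseteq> ?C"
    using poly_ops_commute[OF bounded_op] by fastforce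
  ultimately have "closure (poly_ops T \<times> poly_ops T) \<subseteq> ?C"
    by (rule closure_minimal[rotated])
  thus ?thesis using xy unfolding alg_T_eq_closure_poly_ops closure_Times by auto
qed

end

section \<open>Quasi-regularity and the Jacobson radical\<close>

lemma id_minus_compose_id_minus:
  "(id_blinfun - c) o\<^sub>L (id_blinfun - x) = id_blinfun - (c + x - (c o\<^sub>L x))"
  by (rule blinfun_eqI) (simp add: blinfun.diff_left blinfun.add_left blinfun.diff_right algebra_simps)

lemma quasi_regular_in_iff:
  "quasi_regular_in A x \<longleftrightarrow> (\<exists>c\<in>A. (id_blinfun - c) o\<^sub>L (id_blinfun - x) = id_blinfun)"
proof -
  have "id_blinfun - y = id_blinfun \<longleftrightarrow> y = 0" for y :: "'a::chilbert_space \<Rightarrow>\<^sub>L 'a"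
    by auto
  thus ?thesis unfolding quasi_regular_in_def id_minus_compose_id_minus by (simp only:)
qed

lemma left_inverse_id_minus_trans:
  assumes "(id_blinfun - c) o\<^sub>L (id_blinfun - x) = id_blinfun - y"
    and "(id_blinfun - d) o\<^sub>L (id_blinfun - y) = id_blinfun"
  shows "(id_blinfun - (d + c - (d o\<^sub>L c))) o\<^sub>L (id_blinfun - x) = id_blinfun"
  using assms by (simp add: id_minus_compose_id_minus[symmetric] blinfun_compose_assoc)

context operator_algebra
begin

lemma quasi_regular_trans:
  assumes "c \<in> \<A>" "(id_blinfun - c) o\<^sub>L (id_blinfun - x) = id_blinfun - y"
    and "quasi_regular_in \<A> y"
  shows "quasi_regular_in \<A> x"
proof -
  obtain d where "d \<in> \<A>" "(id_blinfun - d) o\<^sub>L (id_blinfun - y) = id_blinfun"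
    using assms(3) quasi_regular_in_iff by blast
  moreover from this have "d + c - (d o\<^sub>L c) \<in> \<A>"
    by (intro alg_diff alg_add alg_compose assms(1))
  ultimately show ?thesis
    using left_inverse_id_minus_trans[OF assms(2)] unfolding quasi_regular_in_iff by blast
qed

lemma radical_subset: "\<J> \<subseteq> \<A>"
  by (auto simp: jacobson_radical_def)

lemma radical_quasi_regular: "a \<in> \<J> \<Longrightarrow> quasi_regular_in \<A> a"
  unfolding jacobson_radical_def using alg_zero
  by (auto dest!: spec[of _ 1] bspec[of _ _ 0])

lemma radical_left_ideal:
  assumes a: "a \<in> \<J>" and b: "b \<in> \<A>"
  shows "op_scaleC l a + (b o\<^sub>L a) \<in> \<J>"
proof -
  have "quasi_regular_in \<A> (op_scaleC l' (op_scaleC l a + (b o\<^sub>L a)) + (b' o\<^sub>L (op_scaleC l a + (b o\<^sub>L a))))"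
    if b': "b' \<in> \<A>" for l' b'
  proof -
    have "op_scaleC l' (op_scaleC l a + (b o\<^sub>L a)) + (b' o\<^sub>L (op_scaleC l a + (b o\<^sub>L a)))
      = op_scaleC (l' * l) a + ((op_scaleC l' b + op_scaleC l b' + (b' o\<^sub>L b)) o\<^sub>L a)"
      using b' alg_subset_bounded_ops
      by (intro blinfun_eqI) (auto simp: blinfun.add_left blinfun.add_right scaleC_add_right
          scaleC_scaleC bounded_ops_def algebra_simps)
    moreover have "op_scaleC l' b + op_scaleC l b' + (b' o\<^sub>L b) \<in> \<A>"
      by (intro alg_add alg_scale alg_compose b b')
    ultimately show ?thesis using a unfolding jacobson_radical_def by auto
  qed
  moreover have "op_scaleC l a + (b o\<^sub>L a) \<in> \<A>"
    using a radical_subset by (intro alg_add alg_scale alg_compose b) auto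
  ultimately show ?thesis unfolding jacobson_radical_def by blast
qed

lemma radical_scale: "a \<in> \<J> \<Longrightarrow> op_scaleC l a \<in> \<J>"
  using radical_left_ideal[of a 0 l] alg_zero by simp

lemma radical_compose: "a \<in> \<J> \<Longrightarrow> b \<in> \<A> \<Longrightarrow> b o\<^sub>L a \<in> \<J>"
  using radical_left_ideal[of a b 0] by simp

lemma radical_zero: "0 \<in> \<J>"
  unfolding jacobson_radical_def quasi_regular_in_def using alg_zero by auto

lemma quasi_regular_radical_add:
  assumes u: "u \<in> \<J>" and v: "v \<in> \<J>"
  shows "quasi_regular_in \<A> (u + v)"
proof -
  obtain c where c: "c \<in> \<A>" "(id_blinfun - c) o\<^sub>L (id_blinfun - u) = id_blinfun"
    using radical_quasi_regular[OF u] quasi_regular_in_iff by blast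
  have "(id_blinfun - c) o\<^sub>L (id_blinfun - (u + v)) =
      ((id_blinfun - c) o\<^sub>L (id_blinfun - u)) - ((id_blinfun - c) o\<^sub>L v)"
    by (simp add: blinfun_compose.diff_right blinfun_compose.add_right algebra_simps)
  also have "\<dots> = id_blinfun - (op_scaleC 1 v + ((- c) o\<^sub>L v))"
    by (simp add: c(2)) (rule blinfun_eqI, simp add: blinfun.diff_left blinfun.minus_left)
  finally have "(id_blinfun - c) o\<^sub>L (id_blinfun - (u + v)) = id_blinfun - (op_scaleC 1 v + ((- c) o\<^sub>L v))" .
  moreover have "op_scaleC 1 v + ((- c) o\<^sub>L v) \<in> \<J>"
    by (intro radical_left_ideal v alg_minus c(1))
  ultimately show ?thesis using c(1) radical_quasi_regular quasi_regular_trans by blast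
qed

lemma radical_add:
  assumes a: "a \<in> \<J>" and a': "a' \<in> \<J>"
  shows "a + a' \<in> \<J>"
proof -
  have "op_scaleC l (a + a') + (b o\<^sub>L (a + a')) = (op_scaleC l a + (b o\<^sub>L a)) + (op_scaleC l a' + (b o\<^sub>L a'))"
    for l b by (simp add: op_scaleC_add_right blinfun_compose.add_right algebra_simps)
  hence "quasi_regular_in \<A> (op_scaleC l (a + a') + (b o\<^sub>L (a + a')))" if "b \<in> \<A>" for l b
    using quasi_regular_radical_add[OF radical_left_ideal[OF a that] radical_left_ideal[OF a' that]]
    by simp
  moreover have "a + a' \<in> \<A>" using a a' radical_subset alg_add by blast
  ultimately show ?thesis unfolding jacobson_radical_def by blast
qed

lemma radical_sum: "(\<And>i. i \<in> I \<Longrightarrow> f i \<in> \<J>) \<Longrightarrow> (\<Sum>i\<in>I. f i) \<in> \<J>"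
  by (induction I rule: infinite_finite_induct) (auto intro: radical_add radical_zero)

lemma neumann_series_left_inverse:
  assumes w: "w \<in> \<A>" and norm_w: "norm w < 1"
  shows "\<exists>s\<in>\<A>. (id_blinfun + s) o\<^sub>L (id_blinfun - w) = id_blinfun"
proof -
  define f where "f n = op_power w (Suc n)" for n
  have summable: "summable f"
  proof (rule summable_comparison_test')
    show "summable (\<lambda>n. norm w * norm w ^ n)"
      by (intro summable_mult summable_geometric) (use norm_w in simp)
    show "norm (f n) \<le> norm w * norm w ^ n" for n
      using norm_op_power_le[of w "Suc n"] by (simp add: f_def)
  qed
  define s where "s = suminf f"
  have "s \<in> \<A>"
  proof (rule closed_sequentially[OF closed_alg])
    show "(\<lambda>n. \<Sum>i<n. f i) \<longlonglongrightarrow> s" unfolding s_def using summable by (rule summable_LIMSEQ)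
    show "(\<Sum>i<n. f i) \<in> \<A>" for n unfolding f_def by (intro alg_sum alg_op_power w) auto
  qed
  have "s o\<^sub>L w = (\<Sum>n. f n o\<^sub>L w)"
    unfolding s_def by (rule bounded_linear.suminf[OF blinfun_compose.bounded_linear_left summable])
  also have "\<dots> = (\<Sum>n. f (Suc n))"
    unfolding f_def by (simp add: op_power_Suc'[symmetric] del: op_power.simps)
  also have "\<dots> = s - w"
    unfolding s_def using suminf_split_head[OF summable] by (simp add: f_def)
  finally have "s o\<^sub>L w = s - w" .
  hence "(id_blinfun + s) o\<^sub>L (id_blinfun - w) = id_blinfun"
    by (simp add: blinfun_compose.add_left blinfun_compose.diff_right)
  with \<open>s \<in> \<A>\<close> show ?thesis by blast
qed

lemma closure_radical_quasi_regular:
  assumes z: "z \<in> closure \<J>"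
  shows "quasi_regular_in \<A> z"
proof -
  have zA: "z \<in> \<A>" using closure_minimal[OF radical_subset closed_alg] z by blast
  obtain j where j: "j \<in> \<J>" "dist j z < 1"
    using z unfolding closure_approachable by (meson zero_less_one)
  have "z - j \<in> \<A>" "norm (z - j) < 1"
    using zA j radical_subset by (auto intro: alg_diff simp: dist_norm norm_minus_commute)
  then obtain s where s: "s \<in> \<A>" "(id_blinfun + s) o\<^sub>L (id_blinfun - (z - j)) = id_blinfun"
    using neumann_series_left_inverse by blast
  \<comment> \<open>left multiplication by the inverse of 1 - (z - j) turns 1 - z into 1 - (j + s j)\<close>
  have "(id_blinfun - (- s)) o\<^sub>L (id_blinfun - z) = id_blinfun - (op_scaleC 1 j + (s o\<^sub>L j))"
  proof -
    have "(id_blinfun + s) o\<^sub>L (id_blinfun - z) = (id_blinfun + s) o\<^sub>L ((id_blinfun - (z - j)) - j)"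
      by simp
    also have "\<dots> = id_blinfun - ((id_blinfun + s) o\<^sub>L j)"
      by (subst blinfun_compose.diff_right) (simp only: s(2))
    finally have "(id_blinfun + s) o\<^sub>L (id_blinfun - z) = id_blinfun - ((id_blinfun + s) o\<^sub>L j)" .
    thus ?thesis by (simp add: blinfun_compose.add_left)
  qed
  moreover have "op_scaleC 1 j + (s o\<^sub>L j) \<in> \<J>" by (intro radical_left_ideal j s)
  ultimately show ?thesis
    using quasi_regular_trans[OF alg_minus[OF s(1)]] radical_quasi_regular by blast
qed

lemma closed_radical: "closed \<J>"
proof -
  have "y \<in> \<J>" if y: "y \<in> closure \<J>" for y
  proof -
    have "quasi_regular_in \<A> (op_scaleC l y + (b o\<^sub>L y))" if b: "b \<in> \<A>" for l b
    proof (rule closure_radical_quasi_regular, rule closure_preserves_unop[OF _ _ y])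
      show "continuous_on UNIV (\<lambda>y. op_scaleC l y + (b o\<^sub>L y))"
        by (intro continuous_intros continuous_on_compose2[OF continuous_on_op_scaleC]) auto
      show "op_scaleC l x + (b o\<^sub>L x) \<in> \<J>" if "x \<in> \<J>" for x
        using that b by (rule radical_left_ideal)
    qed
    moreover have "y \<in> \<A>" using closure_minimal[OF radical_subset closed_alg] y by blast
    ultimately show "y \<in> \<J>" unfolding jacobson_radical_def by blast
  qed
  thus ?thesis using closure_subset_eq by blast
qed

lemma automorphism_preserves_radical:
  assumes bij: "bij_betw g \<A> \<A>"
    and add: "\<And>S R. S \<in> \<A> \<Longrightarrow> R \<in> \<A> \<Longrightarrow> g (S + R) = g S + g R"
    and scale: "\<And>S c. S \<in> \<A> \<Longrightarrow> g (op_scaleC c S) = op_scaleC c (g S)"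
    and mult: "\<And>S R. S \<in> \<A> \<Longrightarrow> R \<in> \<A> \<Longrightarrow> g (S o\<^sub>L R) = g S o\<^sub>L g R"
    and a: "a \<in> \<J>"
  shows "g a \<in> \<J>"
proof -
  have g_alg: "x \<in> \<A> \<Longrightarrow> g x \<in> \<A>" for x using bij by (auto simp: bij_betw_def)
  have g_diff: "g (x - y) = g x - g y" if "x \<in> \<A>" "y \<in> \<A>" for x y
    using add[of "x - y" y] that alg_diff by (simp add: algebra_simps)
  have g_zero: "g 0 = 0" using g_diff[of 0 0] alg_zero by simp
  have g_quasi_regular: "quasi_regular_in \<A> (g x)"
    if x: "x \<in> \<A>" and "quasi_regular_in \<A> x" for x
  proof -
    obtain c where c: "c \<in> \<A>" "c + x - (c o\<^sub>L x) = 0"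
      using \<open>quasi_regular_in \<A> x\<close> unfolding quasi_regular_in_def by blast
    have "g c + g x - (g c o\<^sub>L g x) = g (c + x - (c o\<^sub>L x))"
      using c(1) x by (simp add: g_diff add mult alg_add alg_compose)
    hence "g c + g x - (g c o\<^sub>L g x) = 0" using c(2) g_zero by simp
    thus ?thesis unfolding quasi_regular_in_def using g_alg c(1) by blast
  qed
  have aA: "a \<in> \<A>" using a radical_subset by blast
  have "quasi_regular_in \<A> (op_scaleC l (g a) + (b o\<^sub>L g a))" if b: "b \<in> \<A>" for l b
  proof -
    obtain b0 where b0: "b0 \<in> \<A>" "b = g b0" using b bij unfolding bij_betw_def by blast
    have "op_scaleC l (g a) + (b o\<^sub>L g a) = g (op_scaleC l a + (b0 o\<^sub>L a))"
      using b0 aA by (simp add: add scale mult alg_scale alg_compose)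
    moreover have "op_scaleC l a + (b0 o\<^sub>L a) \<in> \<J>" by (intro radical_left_ideal a b0)
    ultimately show ?thesis using g_quasi_regular radical_subset radical_quasi_regular by auto
  qed
  thus ?thesis unfolding jacobson_radical_def using g_alg[OF aA] by blast
qed

lemma quasi_regular_of_op_power:
  assumes z: "z \<in> \<A>" and k: "1 \<le> k" and q: "quasi_regular_in \<A> (op_power z k)"
  shows "quasi_regular_in \<A> z"
proof -
  obtain k' where k': "k = Suc k'" using k by (cases k) auto
  define v where "v = - (\<Sum>i<k'. op_power z (Suc i))"
  have "v \<in> \<A>" unfolding v_def by (intro alg_minus alg_sum alg_op_power z) auto
  moreover have "(id_blinfun - v) o\<^sub>L (id_blinfun - z) = id_blinfun - op_power z k"
    using geometric_sum_op_power[of z k] unfolding k' sum.lessThan_Suc_shift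
    by (simp add: v_def del: op_power.simps(2))
  ultimately show ?thesis using q quasi_regular_trans by blast
qed

lemma op_power_scalar_plus_alg:
  assumes b: "b \<in> \<A>"
  shows "\<exists>c\<in>\<A>. op_power (op_scaleC l id_blinfun + b) n = op_scaleC (l ^ n) id_blinfun + c"
proof (induction n)
  case 0 show ?case using alg_zero by (intro bexI[of _ 0]) (auto intro: blinfun_eqI)
next
  case (Suc n)
  then obtain c where c: "c \<in> \<A>" "op_power (op_scaleC l id_blinfun + b) n = op_scaleC (l ^ n) id_blinfun + c"
    by blast
  have "op_power (op_scaleC l id_blinfun + b) (Suc n) =
      op_scaleC (l ^ Suc n) id_blinfun + (op_scaleC l c + op_scaleC (l ^ n) b + (b o\<^sub>L c))"
    unfolding op_power.simps c(2) using b alg_subset_bounded_ops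
    by (intro blinfun_eqI) (auto simp: blinfun.add_left blinfun.add_right bounded_ops_def
        scaleC_add_right scaleC_scaleC algebra_simps)
  moreover have "op_scaleC l c + op_scaleC (l ^ n) b + (b o\<^sub>L c) \<in> \<A>"
    by (intro alg_add alg_scale alg_compose c b)
  ultimately show ?case by blast
qed

text \<open>An element l T + b T of the left ideal generated by T is u T with u = l + b commuting
  with T, so its k-th power u^k T^k lies in the ideal generated by T^k.\<close>

lemma generator_in_radical_of_op_power:
  assumes k: "1 \<le> k" and power: "op_power T k \<in> \<J>"
  shows "T \<in> \<J>"
proof -
  have "quasi_regular_in \<A> (op_scaleC l T + (b o\<^sub>L T))" if b: "b \<in> \<A>" for l b
  proof -
    define u where "u = op_scaleC l id_blinfun + b"
    have u: "op_scaleC l T + (b o\<^sub>L T) = u o\<^sub>L T"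
      unfolding u_def by (rule blinfun_eqI) (simp add: blinfun.add_left)
    have "T o\<^sub>L u = op_scaleC l T + (T o\<^sub>L b)"
      unfolding u_def using bounded_op
      by (intro blinfun_eqI) (simp add: blinfun.add_left blinfun.add_right bounded_ops_def)
    hence commute: "u o\<^sub>L T = T o\<^sub>L u"
      using u alg_commute[OF b generator_in_alg] by simp
    obtain c where c: "c \<in> \<A>" "op_power u k = op_scaleC (l ^ k) id_blinfun + c"
      using op_power_scalar_plus_alg[OF b] unfolding u_def by blast
    have "op_power (u o\<^sub>L T) k = op_scaleC (l ^ k) (op_power T k) + (c o\<^sub>L op_power T k)"
      unfolding op_power_compose[OF commute] c(2) by (rule blinfun_eqI) (simp add: blinfun.add_left)
    also have "\<dots> \<in> \<J>" by (intro radical_left_ideal power c(1))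
    finally have "quasi_regular_in \<A> (op_power (u o\<^sub>L T) k)" by (rule radical_quasi_regular)
    moreover have "u o\<^sub>L T \<in> \<A>" unfolding u[symmetric]
      by (intro alg_add alg_scale alg_compose b generator_in_alg)
    ultimately show ?thesis unfolding u using quasi_regular_of_op_power k by blast
  qed
  thus ?thesis unfolding jacobson_radical_def using generator_in_alg by blast
qed

lemma radical_eq_alg_if_generator_in_radical:
  assumes "T \<in> \<J>"
  shows "\<J> = \<A>"
proof -
  have power: "op_power T k \<in> \<J>" if "1 \<le> k" for k
    using that
  proof (induction k)
    case (Suc k)
    show ?case
    proof (cases "k = 0")
      case False
      hence "op_power T k o\<^sub>L T \<in> \<J>" using Suc by (intro radical_compose assms op_power_in_alg) auto
      thus ?thesis by (simp add: op_power_Suc'[symmetric] del: op_power.simps)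
    qed (use assms in simp)
  qed simp
  have "poly_ops T \<subseteq> \<J>"
  proof
    fix P assume "P \<in> poly_ops T"
    then obtain a n where "P = (\<Sum>k\<in>{1..n}. op_scaleC (a k) (op_power T k))"
      by (auto simp: poly_ops_iff_sum)
    thus "P \<in> \<J>" by (auto intro!: radical_sum radical_scale power)
  qed
  hence "closure (poly_ops T) \<subseteq> \<J>" by (rule closure_minimal[OF _ closed_radical])
  hence "\<A> \<subseteq> \<J>" by (simp add: alg_T_eq_closure_poly_ops)
  thus ?thesis using radical_subset by blast
qed

end

section \<open>Roots of unity and the Fejer kernel\<close>

definition unit_root :: "nat \<Rightarrow> nat \<Rightarrow> complex" where
  "unit_root N j = cis (2 * pi * real j / real N)"

lemma norm_unit_root [simp]: "cmod (unit_root N j) = 1"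
  by (simp add: unit_root_def)

lemma cis_mult_unit_root_power:
  "cis (2 * pi * real j * real_of_int d / real N) * unit_root N j ^ k =
    cis (2 * pi * real j * real_of_int (d + int k) / real N)"
  unfolding unit_root_def Complex.DeMoivre cis_mult
  by (rule arg_cong[where f = cis]) (simp add: add_divide_distrib[symmetric] algebra_simps)

lemma sum_cis_roots_of_unity:
  assumes N: "N > 0"
  shows "(\<Sum>j<N. cis (2 * pi * real j * real_of_int e / real N)) =
    (if int N dvd e then of_nat N else 0)"
proof -
  define z where "z = cis (2 * pi * real_of_int e / real N)"
  have zj: "cis (2 * pi * real j * real_of_int e / real N) = z ^ j" for j
    unfolding z_def Complex.DeMoivre by (rule arg_cong[where f = cis]) (simp add: field_simps)
  have zN: "z ^ N = 1"
    unfolding z_def Complex.DeMoivre using N by (simp add: cis_multiple_2pi)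
  show ?thesis
  proof (cases "int N dvd e")
    case True
    then obtain q where "e = int N * q" by blast
    hence "z = cis (2 * pi * real_of_int q)"
      unfolding z_def using N by (intro arg_cong[where f = cis]) simp
    hence "z = 1" by (simp add: cis_multiple_2pi)
    thus ?thesis using True by (simp add: zj)
  next
    case False
    have "z \<noteq> 1"
    proof
      assume "z = 1"
      then obtain n where "2 * pi * real_of_int e / real N = real_of_int (2 * n) * pi"
        unfolding z_def cis_conv_exp exp_eq_1 by auto
      hence "real_of_int e = real_of_int (n * int N)" using N by (simp add: field_simps)
      hence "e = n * int N" by (simp only: of_int_eq_iff)
      thus False using False by simp
    qed
    thus ?thesis using False zN by (simp add: zj geometric_sum)
  qed
qed

lemma sum_cis_roots_of_unity_small:
  assumes "\<bar>e\<bar> < int N"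
  shows "(\<Sum>j<N. cis (2 * pi * real j * real_of_int e / real N)) = (if e = 0 then of_nat N else 0)"
proof -
  have "int N dvd e \<longleftrightarrow> e = 0"
    using assms dvd_imp_le_int[of e "int N"] by auto
  thus ?thesis using assms sum_cis_roots_of_unity[of N e] by simp
qed

definition fejer_kernel :: "nat \<Rightarrow> complex \<Rightarrow> real" where
  "fejer_kernel n z = (cmod (\<Sum>m<n. z ^ m))\<^sup>2 / real n"

lemma fejer_kernel_nonneg: "0 \<le> fejer_kernel n z"
  by (simp add: fejer_kernel_def)

lemma fejer_kernel_le:
  assumes z: "cmod z = 1" "\<delta> \<le> cmod (z - 1)" "0 < \<delta>"
  shows "fejer_kernel n z \<le> 4 / (real n * \<delta>\<^sup>2)"
proof -
  have "cmod (z ^ n - 1) \<le> 2"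
    using norm_triangle_ineq4[of "z ^ n" 1] z(1) by (simp add: norm_power)
  moreover have "z \<noteq> 1" using z by auto
  ultimately have "cmod (\<Sum>m<n. z ^ m) \<le> 2 / \<delta>"
    using z by (simp add: geometric_sum norm_divide frac_le)
  hence "(cmod (\<Sum>m<n. z ^ m))\<^sup>2 \<le> (2 / \<delta>)\<^sup>2" by (intro power_mono) auto
  thus ?thesis unfolding fejer_kernel_def
    by (cases "n = 0") (simp_all add: power_divide divide_right_mono field_simps)
qed

lemma norm_sum_unit_root_powers_squared:
  "complex_of_real ((cmod (\<Sum>m<n. unit_root N j ^ m))\<^sup>2) =
     (\<Sum>m'<n. \<Sum>m<n. cis (2 * pi * real j * real_of_int (int m' - int m) / real N))"
proof -
  have "unit_root N j ^ m' * cnj (unit_root N j ^ m) =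
      cis (2 * pi * real j * real_of_int (int m' - int m) / real N)" for m m'
    unfolding unit_root_def Complex.DeMoivre cis_cnj cis_mult
    by (rule arg_cong[where f = cis]) (simp add: algebra_simps diff_divide_distrib)
  thus ?thesis unfolding complex_norm_square cnj_sum sum_product by simp
qed

lemma sum_fejer_kernel_unit_roots:
  assumes n: "0 < n" "n \<le> N"
  shows "(\<Sum>j<N. fejer_kernel n (unit_root N j)) = real N"
proof -
  have "complex_of_real (\<Sum>j<N. fejer_kernel n (unit_root N j)) =
      (\<Sum>m'<n. \<Sum>m<n. \<Sum>j<N. cis (2 * pi * real j * real_of_int (int m' - int m) / real N)) / of_nat n"
    unfolding fejer_kernel_def of_real_sum of_real_divide norm_sum_unit_root_powers_squared
      sum_divide_distrib[symmetric]
    by (simp add: sum.swap[of _ "{..<N}"])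
  also have "\<dots> = (\<Sum>m'<n. \<Sum>m<n. if int m' - int m = 0 then of_nat N else 0) / of_nat n"
  proof (intro arg_cong[where f = "\<lambda>x. x / _"] sum.cong refl)
    fix m m' assume "m \<in> {..<n}" "m' \<in> {..<n}"
    hence "\<bar>int m' - int m\<bar> < int N" using n by auto
    thus "(\<Sum>j<N. cis (2 * pi * real j * real_of_int (int m' - int m) / real N)) =
        (if int m' - int m = 0 then of_nat N else 0)"
      by (rule sum_cis_roots_of_unity_small)
  qed
  also have "\<dots> = complex_of_real (real N)" using n by simp
  finally show ?thesis by (simp only: of_real_eq_iff)
qed

definition fejer_mean :: "nat \<Rightarrow> nat \<Rightarrow> (complex \<Rightarrow> 'a::real_normed_vector) \<Rightarrow> 'a" where
  "fejer_mean n N f = (1 / real N) *\<^sub>R (\<Sum>j<N. fejer_kernel n (unit_root N j) *\<^sub>R f (unit_root N j))"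

lemma fejer_kernel_weighted_error_le:
  fixes f :: "complex \<Rightarrow> 'a::real_normed_vector"
  assumes z: "cmod z = 1" and \<delta>: "0 < \<delta>"
    and near: "\<And>z. cmod z = 1 \<Longrightarrow> dist z 1 < \<delta> \<Longrightarrow> norm (v - f z) \<le> \<epsilon>"
    and bound: "\<And>z. cmod z = 1 \<Longrightarrow> norm (v - f z) \<le> B"
  shows "fejer_kernel n z * norm (v - f z) \<le> \<epsilon> * fejer_kernel n z + 4 * B / (real n * \<delta>\<^sup>2)"
proof (cases "dist z 1 < \<delta>")
  case True
  have "0 \<le> B" using order_trans[OF norm_ge_zero bound[of 1]] by simp
  hence "0 \<le> 4 * B / (real n * \<delta>\<^sup>2)" by simp
  moreover have "fejer_kernel n z * norm (v - f z) \<le> fejer_kernel n z * \<epsilon>"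
    using True z by (intro mult_left_mono near fejer_kernel_nonneg)
  ultimately show ?thesis by (simp add: mult.commute)
next
  case False
  have "0 \<le> \<epsilon>" using order_trans[OF norm_ge_zero near[of 1]] \<delta> by simp
  have "fejer_kernel n z \<le> 4 / (real n * \<delta>\<^sup>2)"
    using False z \<delta> by (intro fejer_kernel_le) (auto simp: dist_norm)
  hence "fejer_kernel n z * norm (v - f z) \<le> 4 / (real n * \<delta>\<^sup>2) * B"
    using z by (intro mult_mono bound) (auto simp: fejer_kernel_nonneg)
  thus ?thesis using \<open>0 \<le> \<epsilon>\<close> fejer_kernel_nonneg[of n z] by (simp add: add_increasing)
qed

lemma norm_fejer_mean_error_le:
  fixes f :: "complex \<Rightarrow> 'a::real_normed_vector"
  assumes n: "0 < n" "n \<le> N" and \<delta>: "0 < \<delta>"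
    and near: "\<And>z. cmod z = 1 \<Longrightarrow> dist z 1 < \<delta> \<Longrightarrow> norm (v - f z) \<le> \<epsilon>"
    and bound: "\<And>z. cmod z = 1 \<Longrightarrow> norm (v - f z) \<le> B"
  shows "norm (v - fejer_mean n N f) \<le> \<epsilon> + 4 * B / (real n * \<delta>\<^sup>2)"
proof -
  define K where "K j = fejer_kernel n (unit_root N j)" for j
  define C where "C = 4 * B / (real n * \<delta>\<^sup>2)"
  have N: "0 < N" using n by simp
  have v: "v = (1 / real N) *\<^sub>R (\<Sum>j<N. K j *\<^sub>R v)"
    using N by (simp add: scaleR_sum_left[symmetric] K_def sum_fejer_kernel_unit_roots n)
  have diff: "v - fejer_mean n N f = (1 / real N) *\<^sub>R (\<Sum>j<N. K j *\<^sub>R (v - f (unit_root N j)))"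
    unfolding fejer_mean_def K_def[symmetric]
    by (subst (1) v) (simp only: scaleR_diff_right sum_subtractf)
  have "norm (\<Sum>j<N. K j *\<^sub>R (v - f (unit_root N j))) \<le> (\<Sum>j<N. \<epsilon> * K j + C)"
    unfolding K_def C_def
    by (rule order_trans[OF norm_sum sum_mono])
      (simp add: fejer_kernel_nonneg, rule fejer_kernel_weighted_error_le[OF norm_unit_root \<delta> near bound])
  hence "norm (v - fejer_mean n N f) \<le> (1 / real N) * (\<Sum>j<N. \<epsilon> * K j + C)"
    unfolding diff by (simp add: divide_right_mono)
  also have "\<dots> = \<epsilon> + C"
    using N by (simp add: sum.distrib sum_distrib_left[symmetric] K_def sum_fejer_kernel_unit_roots n
        field_simps)
  finally show ?thesis unfolding C_def .
qed

section \<open>Fourier coefficients of a gauge orbit\<close>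

text \<open>The Riemann sum over the N-th roots of unity for the integral of \<lambda>^d \<gamma>_\<lambda>(S) over the
  circle; on a polynomial in T it picks out the coefficient of T^(-d).\<close>

definition gauge_fourier ::
  "(complex \<Rightarrow> ('h::chilbert_space \<Rightarrow>\<^sub>L 'h) \<Rightarrow> ('h \<Rightarrow>\<^sub>L 'h)) \<Rightarrow> nat \<Rightarrow> int \<Rightarrow> ('h \<Rightarrow>\<^sub>L 'h) \<Rightarrow> ('h \<Rightarrow>\<^sub>L 'h)"
  where "gauge_fourier \<gamma> N d S = (1 / real N) *\<^sub>R
    (\<Sum>j<N. op_scaleC (cis (2 * pi * real j * real_of_int d / real N)) (\<gamma> (unit_root N j) S))"

lemma fejer_mean_eq_sum_gauge_fourier:
  assumes "0 < n"
  shows "fejer_mean n N (\<lambda>z. \<gamma> z S) =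
    (1 / real n) *\<^sub>R (\<Sum>m'<n. \<Sum>m<n. gauge_fourier \<gamma> N (int m' - int m) S)"
proof -
  have "(\<Sum>m'<n. \<Sum>m<n. gauge_fourier \<gamma> N (int m' - int m) S) = (1 / real N) *\<^sub>R
      (\<Sum>j<N. \<Sum>m'<n. \<Sum>m<n. op_scaleC (cis (2 * pi * real j * real_of_int (int m' - int m) / real N))
        (\<gamma> (unit_root N j) S))"
    unfolding gauge_fourier_def scaleR_sum_right
    by (subst sum.swap) (rule sum.cong[OF refl], rule sum.swap)
  also have "\<dots> = (1 / real N) *\<^sub>R (\<Sum>j<N.
      op_scaleC (complex_of_real ((cmod (\<Sum>m<n. unit_root N j ^ m))\<^sup>2)) (\<gamma> (unit_root N j) S))"
    unfolding norm_sum_unit_root_powers_squared op_scaleC_sum_left ..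
  also have "\<dots> = real n *\<^sub>R fejer_mean n N (\<lambda>z. \<gamma> z S)"
    unfolding fejer_mean_def op_scaleC_of_real scaleR_sum_right fejer_kernel_def using assms by simp
  finally show ?thesis using assms by simp
qed

locale gauge = operator_algebra +
  fixes \<gamma>
  assumes gauge_action: "gauge_action T \<gamma>"
begin

lemma gauge_bij: "cmod l = 1 \<Longrightarrow> bij_betw (\<gamma> l) \<A> \<A>"
  and gauge_add: "cmod l = 1 \<Longrightarrow> S \<in> \<A> \<Longrightarrow> R \<in> \<A> \<Longrightarrow> \<gamma> l (S + R) = \<gamma> l S + \<gamma> l R"
  and gauge_scale: "cmod l = 1 \<Longrightarrow> S \<in> \<A> \<Longrightarrow> \<gamma> l (op_scaleC c S) = op_scaleC c (\<gamma> l S)"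
  and gauge_compose:
    "cmod l = 1 \<Longrightarrow> S \<in> \<A> \<Longrightarrow> R \<in> \<A> \<Longrightarrow> \<gamma> l (S o\<^sub>L R) = \<gamma> l S o\<^sub>L \<gamma> l R"
  and norm_gauge: "cmod l = 1 \<Longrightarrow> S \<in> \<A> \<Longrightarrow> norm (\<gamma> l S) = norm S"
  and gauge_generator: "cmod l = 1 \<Longrightarrow> \<gamma> l T = op_scaleC l T"
  and gauge_mult:
    "cmod l = 1 \<Longrightarrow> cmod m = 1 \<Longrightarrow> S \<in> \<A> \<Longrightarrow> \<gamma> (l * m) S = \<gamma> l (\<gamma> m S)"
  and continuous_on_gauge: "S \<in> \<A> \<Longrightarrow> continuous_on {l. cmod l = 1} (\<lambda>l. \<gamma> l S)"
  using gauge_action unfolding gauge_action_def by blast+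

lemma gauge_in_alg: "cmod l = 1 \<Longrightarrow> S \<in> \<A> \<Longrightarrow> \<gamma> l S \<in> \<A>"
  using gauge_bij by (auto simp: bij_betw_def)

lemma gauge_diff: "cmod l = 1 \<Longrightarrow> S \<in> \<A> \<Longrightarrow> R \<in> \<A> \<Longrightarrow> \<gamma> l (S - R) = \<gamma> l S - \<gamma> l R"
  using gauge_add[of l "S - R" R] alg_diff[of S R] by (simp add: algebra_simps)

lemma gauge_sum:
  "cmod l = 1 \<Longrightarrow> (\<And>i. i \<in> I \<Longrightarrow> f i \<in> \<A>) \<Longrightarrow> \<gamma> l (\<Sum>i\<in>I. f i) = (\<Sum>i\<in>I. \<gamma> l (f i))"
proof (induction I rule: infinite_finite_induct)
  case (insert x F)
  thus ?case by (simp add: gauge_add alg_sum)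
qed (use gauge_diff[of l 0 0] alg_zero in simp_all)

lemma gauge_one: "S \<in> \<A> \<Longrightarrow> \<gamma> 1 S = S"
proof -
  assume S: "S \<in> \<A>"
  have "\<gamma> 1 (\<gamma> 1 S) = \<gamma> 1 S" using gauge_mult[of 1 1 S] S by simp
  moreover have "inj_on (\<gamma> 1) \<A>" using gauge_bij[of 1] by (simp add: bij_betw_def)
  ultimately show ?thesis using S gauge_in_alg[of 1 S] by (auto dest: inj_onD)
qed

lemma gauge_op_power: "cmod l = 1 \<Longrightarrow> 1 \<le> k \<Longrightarrow> \<gamma> l (op_power T k) = op_scaleC (l ^ k) (op_power T k)"
proof (induction k)
  case (Suc k)
  show ?case
  proof (cases "k = 0")
    case False
    hence "\<gamma> l (op_power T (Suc k)) = op_scaleC l T o\<^sub>L op_scaleC (l ^ k) (op_power T k)"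
      using Suc by (simp add: gauge_compose gauge_generator generator_in_alg op_power_in_alg)
    thus ?thesis using bounded_op by (simp add: op_scaleC_compose_op_scaleC)
  qed (use Suc gauge_generator in simp)
qed simp

lemma gauge_poly:
  "cmod l = 1 \<Longrightarrow> \<gamma> l (\<Sum>k\<in>{1..n}. op_scaleC (a k) (op_power T k)) =
    (\<Sum>k\<in>{1..n}. op_scaleC (a k * l ^ k) (op_power T k))"
  by (subst gauge_sum) (auto intro!: sum.cong alg_scale op_power_in_alg
      simp: gauge_scale gauge_op_power op_power_in_alg op_scaleC_scaleC)

lemma gauge_preserves_radical: "cmod l = 1 \<Longrightarrow> S \<in> \<J> \<Longrightarrow> \<gamma> l S \<in> \<J>"
  by (rule automorphism_preserves_radical) (auto intro: gauge_bij gauge_add gauge_scale gauge_compose)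

lemma gauge_fourier_in_radical: "S \<in> \<J> \<Longrightarrow> gauge_fourier \<gamma> N d S \<in> \<J>"
  unfolding gauge_fourier_def op_scaleC_of_real[symmetric]
  by (intro radical_scale radical_sum gauge_preserves_radical) auto

lemma gauge_fourier_diff:
  "S \<in> \<A> \<Longrightarrow> R \<in> \<A> \<Longrightarrow> gauge_fourier \<gamma> N d (S - R) = gauge_fourier \<gamma> N d S - gauge_fourier \<gamma> N d R"
  unfolding gauge_fourier_def
  by (simp add: gauge_diff op_scaleC_diff_right sum_subtractf scaleR_diff_right)

lemma norm_gauge_fourier_le: "S \<in> \<A> \<Longrightarrow> norm (gauge_fourier \<gamma> N d S) \<le> norm S"
proof (cases "N = 0")
  case False
  assume S: "S \<in> \<A>"
  have "norm (\<Sum>j<N. op_scaleC (cis (2 * pi * real j * real_of_int d / real N)) (\<gamma> (unit_root N j) S))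
      \<le> (\<Sum>j<N. norm S)"
    by (rule order_trans[OF norm_sum sum_mono]) (simp add: norm_op_scaleC norm_gauge S)
  thus ?thesis using False unfolding gauge_fourier_def by (simp add: field_simps)
qed (simp add: gauge_fourier_def)

lemma gauge_fourier_poly:
  assumes N: "n + nat \<bar>d\<bar> < N"
  shows "gauge_fourier \<gamma> N d (\<Sum>k\<in>{1..n}. op_scaleC (a k) (op_power T k)) =
     op_scaleC (if d < 0 \<and> nat (-d) \<le> n then a (nat (-d)) else 0) (op_power T (nat (-d)))"
proof -
  have "cis (2 * pi * real j * real_of_int d / real N) * (a k * unit_root N j ^ k) =
      a k * cis (2 * pi * real j * real_of_int (d + int k) / real N)" for j k
    by (subst cis_mult_unit_root_power[symmetric]) (simp only: mult_ac)
  hence "gauge_fourier \<gamma> N d (\<Sum>k\<in>{1..n}. op_scaleC (a k) (op_power T k)) = (1 / real N) *\<^sub>R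
      (\<Sum>j<N. \<Sum>k\<in>{1..n}. op_scaleC (a k * cis (2 * pi * real j * real_of_int (d + int k) / real N))
        (op_power T k))"
    unfolding gauge_fourier_def gauge_poly[OF norm_unit_root] op_scaleC_sum_right
    by (simp only: op_scaleC_scaleC)
  also have "\<dots> = (1 / real N) *\<^sub>R
      (\<Sum>k\<in>{1..n}. op_scaleC (a k * (\<Sum>j<N. cis (2 * pi * real j * real_of_int (d + int k) / real N)))
        (op_power T k))"
    by (subst sum.swap) (simp add: sum_distrib_left op_scaleC_sum_left)
  also have "\<dots> = (\<Sum>k\<in>{1..n}. if d + int k = 0 then op_scaleC (a k) (op_power T k) else 0)"
    unfolding scaleR_sum_right
  proof (intro sum.cong refl)
    fix k assume "k \<in> {1..n}"
    hence "\<bar>d + int k\<bar> < int N" using N by auto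
    thus "(1 / real N) *\<^sub>R op_scaleC (a k * (\<Sum>j<N. cis (2 * pi * real j * real_of_int (d + int k) / real N)))
        (op_power T k) = (if d + int k = 0 then op_scaleC (a k) (op_power T k) else 0)"
      by (simp only: sum_cis_roots_of_unity_small)
        (use N in \<open>auto simp: op_scaleC_of_real[symmetric] op_scaleC_scaleC\<close>)
  qed
  also have "\<dots> = op_scaleC (if d < 0 \<and> nat (-d) \<le> n then a (nat (-d)) else 0) (op_power T (nat (-d)))"
  proof (cases "d < 0 \<and> nat (-d) \<le> n")
    case True
    hence "(\<Sum>k\<in>{1..n}. if d + int k = 0 then op_scaleC (a k) (op_power T k) else 0) =
        (\<Sum>k\<in>{1..n}. if k = nat (-d) then op_scaleC (a k) (op_power T k) else 0)"
      by (intro sum.cong refl) auto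
    moreover have "1 \<le> nat (-d)" using True by linarith
    ultimately show ?thesis using True by simp
  qed (auto intro!: sum.neutral)
  finally show ?thesis .
qed

lemma gauge_fourier_approx:
  assumes S: "S \<in> \<A>" and e: "0 < e"
  obtains c where "0 \<le> d \<Longrightarrow> c = 0"
    and "\<forall>\<^sub>F N in sequentially. norm (gauge_fourier \<gamma> N d S - op_scaleC c (op_power T (nat (-d)))) < e"
proof -
  obtain P where P: "P \<in> poly_ops T" "dist P S < e"
    using S e unfolding alg_T_eq_closure_poly_ops closure_approachable by blast
  then obtain a n where Pa: "P = (\<Sum>k\<in>{1..n}. op_scaleC (a k) (op_power T k))"
    by (auto simp: poly_ops_iff_sum)
  define c where "c = (if d < 0 \<and> nat (-d) \<le> n then a (nat (-d)) else 0)"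
  have PA: "P \<in> \<A>" using P(1) poly_ops_subset_alg by blast
  have "norm (gauge_fourier \<gamma> N d S - op_scaleC c (op_power T (nat (-d)))) < e"
    if "n + nat \<bar>d\<bar> < N" for N
  proof -
    have "gauge_fourier \<gamma> N d S - op_scaleC c (op_power T (nat (-d))) = gauge_fourier \<gamma> N d (S - P)"
      using gauge_fourier_poly[OF that] gauge_fourier_diff[OF S PA] unfolding Pa c_def by simp
    also have "norm \<dots> \<le> norm (S - P)" by (intro norm_gauge_fourier_le alg_diff S PA)
    finally show ?thesis using P(2) by (simp add: dist_norm norm_minus_commute)
  qed
  hence "\<forall>\<^sub>F N in sequentially. norm (gauge_fourier \<gamma> N d S - op_scaleC c (op_power T (nat (-d)))) < e"
    unfolding eventually_sequentially by (auto intro!: exI[of _ "Suc (n + nat \<bar>d\<bar>)"])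
  moreover have "0 \<le> d \<Longrightarrow> c = 0" by (simp add: c_def)
  ultimately show ?thesis using that by blast
qed


text \<open>The radical is closed and misses T^k, so the distance from c T^k to it,
  |c| times the distance from T^k, is comparable to |c|.\<close>

lemma radical_norm_le_dist_op_power_multiple:
  assumes T: "T \<notin> \<J>" and k: "1 \<le> k"
  obtains K where "0 < K" "\<And>c F. F \<in> \<J> \<Longrightarrow> norm F \<le> K * norm (F - op_scaleC c (op_power T k))"
proof -
  let ?X = "op_power T k"
  define r where "r = infdist ?X \<J>"
  have "?X \<notin> \<J>" using T generator_in_radical_of_op_power k by blast
  hence r: "0 < r"
    unfolding r_def using closed_radical radical_zero by (intro infdist_pos_not_in_closed) auto
  have far: "cmod c * r \<le> norm (F - op_scaleC c ?X)" if F: "F \<in> \<J>" for c F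
  proof (cases "c = 0")
    case False
    have "F - op_scaleC c ?X = op_scaleC c (op_scaleC (1 / c) F - ?X)"
      using False by (simp add: op_scaleC_diff_right op_scaleC_scaleC)
    moreover have "r \<le> norm (?X - op_scaleC (1 / c) F)"
      unfolding r_def using infdist_le[OF radical_scale[OF F]] by (simp add: dist_norm)
    ultimately show ?thesis by (simp add: norm_op_scaleC mult_left_mono norm_minus_commute)
  qed simp
  have "norm F \<le> (1 + norm ?X / r) * norm (F - op_scaleC c ?X)" if F: "F \<in> \<J>" for c F
  proof -
    have "cmod c * norm ?X \<le> norm (F - op_scaleC c ?X) / r * norm ?X"
      using far[OF F, of c] r by (intro mult_right_mono) (simp_all add: field_simps)
    moreover have "norm F \<le> norm (F - op_scaleC c ?X) + cmod c * norm ?X"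
      using norm_triangle_ineq[of "F - op_scaleC c ?X" "op_scaleC c ?X"] by (simp add: norm_op_scaleC)
    ultimately show ?thesis by (simp add: algebra_simps)
  qed
  moreover have "0 < 1 + norm ?X / r" using r by (simp add: add_pos_nonneg)
  ultimately show ?thesis using that by blast
qed

lemma gauge_fourier_radical_tendsto_0:
  assumes T: "T \<notin> \<J>" and S: "S \<in> \<J>"
  shows "(\<lambda>N. gauge_fourier \<gamma> N d S) \<longlonglongrightarrow> 0"
proof -
  let ?X = "op_power T (nat (-d))"
  have SA: "S \<in> \<A>" using S radical_subset by blast
  obtain K where K: "0 < K"
    and K_le: "\<And>c F. (0 \<le> d \<Longrightarrow> c = 0) \<Longrightarrow> F \<in> \<J> \<Longrightarrow> norm F \<le> K * norm (F - op_scaleC c ?X)"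
  proof (cases "0 \<le> d")
    case True
    show ?thesis by (rule that[of 1]) (use True in simp_all)
  next
    case False
    hence "1 \<le> nat (-d)" by linarith
    then obtain K where "0 < K" "\<And>c F. F \<in> \<J> \<Longrightarrow> norm F \<le> K * norm (F - op_scaleC c ?X)"
      using radical_norm_le_dist_op_power_multiple[OF T] by blast
    thus ?thesis using that[of K] by blast
  qed
  show ?thesis unfolding tendsto_iff dist_norm
  proof (intro allI impI)
    fix e :: real assume "0 < e"
    then obtain c where c: "0 \<le> d \<Longrightarrow> c = 0"
      and "\<forall>\<^sub>F N in sequentially. norm (gauge_fourier \<gamma> N d S - op_scaleC c ?X) < e / K"
      using gauge_fourier_approx[OF SA divide_pos_pos[OF \<open>0 < e\<close> K], where d = d] by blast
    moreover have "norm F < e" if "F \<in> \<J>" "norm (F - op_scaleC c ?X) < e / K" for F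
    proof -
      have "K * norm (F - op_scaleC c ?X) < e" using that(2) K by (simp add: field_simps)
      thus ?thesis using K_le[OF c that(1)] by linarith
    qed
    ultimately show "\<forall>\<^sub>F N in sequentially. norm (gauge_fourier \<gamma> N d S - 0) < e"
      using gauge_fourier_in_radical[OF S] by (auto elim: eventually_mono)
  qed
qed

lemma fejer_mean_gauge_tendsto_0:
  assumes "T \<notin> \<J>" "S \<in> \<J>" "0 < n"
  shows "(\<lambda>N. fejer_mean n N (\<lambda>z. \<gamma> z S)) \<longlonglongrightarrow> 0"
proof -
  have "(\<lambda>N. (1 / real n) *\<^sub>R (\<Sum>m'<n. \<Sum>m<n. gauge_fourier \<gamma> N (int m' - int m) S))
      \<longlonglongrightarrow> (1 / real n) *\<^sub>R 0"
    by (intro tendsto_scaleR tendsto_const tendsto_null_sum gauge_fourier_radical_tendsto_0 assms(1,2))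
  thus ?thesis unfolding fejer_mean_eq_sum_gauge_fourier[OF assms(3)] by simp
qed

lemma eq_0_if_in_radical:
  assumes T: "T \<notin> \<J>" and S: "S \<in> \<J>"
  shows "S = 0"
proof -
  have SA: "S \<in> \<A>" using S radical_subset by blast
  have "norm S \<le> \<epsilon>" if "0 < \<epsilon>" for \<epsilon>
  proof -
    have one: "(1::complex) \<in> {l. cmod l = 1}" by simp
    obtain \<delta> where \<delta>: "0 < \<delta>"
      "\<forall>z\<in>{l. cmod l = 1}. dist z 1 < \<delta> \<longrightarrow> dist (\<gamma> z S) (\<gamma> 1 S) < \<epsilon>"
      using continuous_on_gauge[OF SA, unfolded continuous_on_iff, rule_format, OF one \<open>0 < \<epsilon>\<close>]
      by blast
    have near: "norm (S - \<gamma> z S) \<le> \<epsilon>" if "cmod z = 1" "dist z 1 < \<delta>" for z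
    proof -
      have "dist (\<gamma> z S) (\<gamma> 1 S) < \<epsilon>" using \<delta>(2) that by blast
      thus ?thesis unfolding gauge_one[OF SA] dist_norm by (simp only: norm_minus_commute less_imp_le)
    qed
    have bound: "norm (S - \<gamma> z S) \<le> 2 * norm S" if "cmod z = 1" for z
      using norm_triangle_ineq4[of S "\<gamma> z S"] norm_gauge[OF that SA] by simp
    have "norm S \<le> \<epsilon> + (8 * norm S / \<delta>\<^sup>2) / real n" if n: "1 \<le> n" for n
    proof -
      have "norm (S - fejer_mean n N (\<lambda>z. \<gamma> z S)) \<le> \<epsilon> + 4 * (2 * norm S) / (real n * \<delta>\<^sup>2)"
        if "n \<le> N" for N
        using n that \<delta>(1) near bound by (intro norm_fejer_mean_error_le) auto
      hence "\<forall>\<^sub>F N in sequentially.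
          norm (S - fejer_mean n N (\<lambda>z. \<gamma> z S)) \<le> \<epsilon> + 4 * (2 * norm S) / (real n * \<delta>\<^sup>2)"
        unfolding eventually_sequentially by blast
      moreover have "(\<lambda>N. norm (S - fejer_mean n N (\<lambda>z. \<gamma> z S))) \<longlonglongrightarrow> norm (S - 0)"
        using n by (intro tendsto_intros fejer_mean_gauge_tendsto_0 T S) simp
      ultimately show ?thesis by (simp add: tendsto_upperbound mult.commute)
    qed
    moreover have "(\<lambda>n. \<epsilon> + (8 * norm S / \<delta>\<^sup>2) / real n) \<longlonglongrightarrow> \<epsilon> + 0"
      by (intro tendsto_add tendsto_const lim_const_over_n)
    ultimately show ?thesis using LIMSEQ_le_const by fastforce
  qed
  hence "norm S \<le> 0" by (rule field_le_epsilon) simp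
  thus ?thesis by simp
qed

end

theorem mainTheorem4:
  fixes T :: "'h::chilbert_space \<Rightarrow>\<^sub>L 'h"
  assumes "T \<in> bounded_ops"
    and "\<exists>\<gamma>. gauge_action T \<gamma>"
  shows "jacobson_radical (alg_T T) = {0} \<or> jacobson_radical (alg_T T) = alg_T T"
proof -
  obtain \<gamma> where "gauge_action T \<gamma>" using assms(2) by blast
  then interpret gauge T \<gamma> using assms(1) by unfold_locales
  show ?thesis
  proof (cases "T \<in> jacobson_radical (alg_T T)")
    case True
    thus ?thesis using radical_eq_alg_if_generator_in_radical by blast
  next
    case False
    thus ?thesis using eq_0_if_in_radical radical_zero by blast
  qed
qed

end
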